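(* Let $k\ge0$, $m\ge1$ and define $Q(a,x):=\sum_{\varepsilon\in\{0,1\}^k}(-1)^{\#1(\varepsilon)}P(\varepsilon;b)$, where $\#1(\varepsilon)$ is the number of ones in $\varepsilon$. Then $Q(a,x)$ can be written as a quotient $f(a,x)/g(a,x)$ of polynomials such that $g$ has no factor of the form $M(\varepsilon';b;t)$ for any $\varepsilon'\in\{0,1\}^k$ and any $1\le t\le k$.
   Context: Let $a=(a_1,\dots,a_k)$ and $x=(x_1,\dots,x_m)$ be indeterminates and $b=(b_1,\dots,b_{k+m}):=(a_1,\dots,a_k,x_1,\dots,x_m)$. For a binary sequence $\varepsilon=(\varepsilon_1,\dots,\varepsilon_k)$ put $\delta^\varepsilon=(\delta^\varepsilon_1,\dots,\delta^\varepsilon_{k+m}):=(1,\varepsilon_1,\dots,\varepsilon_k,0,\dots,0)$ (length $k+m$: a $1$ prepended and $m-1$ zeros appended). Let $L(\delta^\varepsilon,j):=\max\{i\le j:\delta^\varepsilon_i=1\}$, $M(\varepsilon;b;j):=\sum_{\ell=L(\delta^\varepsilon,j)}^{j}b_\ell$, and $P(\varepsilon;b):=\prod_{j=1}^{k+m}\frac1{M(\varepsilon;b;j)}$. *)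

theory Defs
  imports Complex_Main "HOL-Library.Poly_Mapping" "HOL-Computational_Algebra.Fraction_Field"
begin

text \<open>Multivariate polynomials with rational coefficients in the indeterminates
  b_1, ..., b_{k+m}, where b_i = a_i for i \<le> k and b_{k+i} = x_i.\<close>
type_synonym mpoly = "(nat \<Rightarrow>\<^sub>0 nat) \<Rightarrow>\<^sub>0 rat"

definition var :: "nat \<Rightarrow> mpoly" where
  "var i = Poly_Mapping.single (Poly_Mapping.single i 1) 1"

text \<open>delta^eps = (1, eps_1, ..., eps_k, 0, ..., 0), indexed from 1; eps is a
  bool list of length k (True = 1).\<close>
definition delta :: "bool list \<Rightarrow> nat \<Rightarrow> bool" where
  "delta eps i = (i = 1 \<or> (2 \<le> i \<and> i \<le> length eps + 1 \<and> eps ! (i - 2)))"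

definition Lidx :: "bool list \<Rightarrow> nat \<Rightarrow> nat" where
  "Lidx eps j = Max {i. 1 \<le> i \<and> i \<le> j \<and> delta eps i}"

definition Mpoly :: "bool list \<Rightarrow> nat \<Rightarrow> mpoly" where
  "Mpoly eps j = (\<Sum>l\<in>{Lidx eps j..j}. var l)"

definition Pfrac :: "nat \<Rightarrow> bool list \<Rightarrow> mpoly fract" where
  "Pfrac m eps = (\<Prod>j\<in>{1..length eps + m}. Fract 1 (Mpoly eps j))"

definition Qfrac :: "nat \<Rightarrow> nat \<Rightarrow> mpoly fract" where
  "Qfrac k m = (\<Sum>eps\<in>{eps. length eps = k}. (-1) ^ count_list eps True * Pfrac m eps)"

end

theory Submission
  imports Defs "HOL-Computational_Algebra.Polynomial_Factorial"
begin

text \<open>Write \<open>S(s,t) = b_s + ... + b_(t-1)\<close> and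
  \<open>A_u(s,t) = \<Sum>_(p=s..u) (-1)^p \<Prod>_(s\<le>i<p) 1/S(i,p) \<Prod>_(p\<le>j<t) 1/S(p,j+1)\<close>.
  Splitting off the last entry of \<open>\<epsilon>\<close> gives a recursion in \<open>k\<close> for \<open>Q\<close> which, together with
  the partial fraction identity \<open>A_t(s,t) = 0\<close> for \<open>s < t\<close>, yields \<open>Q = -A_(k+1)(1,k+m+1)\<close>.
  Now \<open>S(s,t) A_u(s,t) = A_u(s+1,t) + A_u(s,t-1)\<close> and \<open>A_u(s,u)\<close> is a constant, so
  \<open>A_(k+1)(1,k+m+1)\<close> is built from constants by sums, products and inverses of sums \<open>S(s,t)\<close>
  with \<open>s \<le> k+1 < t\<close>. None of these vanishes at the unit vector \<open>e_(k+1)\<close>, whereas every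
  \<open>M(\<epsilon>';b;t)\<close> with \<open>t \<le> k\<close> does.\<close>

section \<open>Evaluation at a unit vector\<close>

definition eval_unit :: "nat \<Rightarrow> mpoly \<Rightarrow> rat" where
  "eval_unit c p =
     (\<Sum>\<mu>\<in>Poly_Mapping.keys p. Poly_Mapping.lookup p \<mu> * (if Poly_Mapping.keys \<mu> \<subseteq> {c} then 1 else 0))"

lemma eval_unit_superset:
  assumes "finite A" "Poly_Mapping.keys p \<subseteq> A"
  shows "eval_unit c p =
           (\<Sum>\<mu>\<in>A. Poly_Mapping.lookup p \<mu> * (if Poly_Mapping.keys \<mu> \<subseteq> {c} then 1 else 0))"
  unfolding eval_unit_def using assms by (intro sum.mono_neutral_left) (auto simp: in_keys_iff)

lemma eval_unit_add: "eval_unit c (p + q) = eval_unit c p + eval_unit c q"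
proof -
  let ?A = "Poly_Mapping.keys p \<union> Poly_Mapping.keys q"
  have "finite ?A" by simp
  from eval_unit_superset[OF this keys_add] eval_unit_superset[OF this, of p]
    eval_unit_superset[OF this, of q]
  show ?thesis by (simp add: lookup_add distrib_right sum.distrib)
qed

lemma eval_unit_zero [simp]: "eval_unit c 0 = 0"
  by (simp add: eval_unit_def)

lemma eval_unit_single:
  "eval_unit c (Poly_Mapping.single \<mu> a) = (if Poly_Mapping.keys \<mu> \<subseteq> {c} then a else 0)"
  by (simp add: eval_unit_def)

lemma eval_unit_sum: "eval_unit c (sum f A) = (\<Sum>x\<in>A. eval_unit c (f x))"
  by (induction A rule: infinite_finite_induct) (auto simp: eval_unit_add)

lemma keys_add_subset_singleton_iff:
  fixes \<mu> \<nu> :: "'a \<Rightarrow>\<^sub>0 nat"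
  shows "Poly_Mapping.keys (\<mu> + \<nu>) \<subseteq> {c} \<longleftrightarrow>
           Poly_Mapping.keys \<mu> \<subseteq> {c} \<and> Poly_Mapping.keys \<nu> \<subseteq> {c}"
proof -
  have "x \<in> Poly_Mapping.keys (\<mu> + \<nu>) \<longleftrightarrow> x \<in> Poly_Mapping.keys \<mu> \<or> x \<in> Poly_Mapping.keys \<nu>" for x
    by (simp add: in_keys_iff lookup_add)
  then show ?thesis by blast
qed

lemma update_eq_add_single:
  "a \<notin> Poly_Mapping.keys f \<Longrightarrow> Poly_Mapping.update a b f = f + Poly_Mapping.single a b"
  by (intro poly_mapping_eqI) (auto simp: lookup_update lookup_add lookup_single in_keys_iff when_def)

lemma eval_unit_single_mult:
  "eval_unit c (Poly_Mapping.single \<mu> a * q) = eval_unit c (Poly_Mapping.single \<mu> a) * eval_unit c q"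
proof (induction q rule: Poly_Mapping.update_induct)
  case (update q \<nu> b)
  then show ?case
    by (simp add: update_eq_add_single distrib_left eval_unit_add mult_single eval_unit_single
        keys_add_subset_singleton_iff)
qed simp

lemma eval_unit_mult: "eval_unit c (p * q) = eval_unit c p * eval_unit c q"
proof (induction p rule: Poly_Mapping.update_induct)
  case (update p \<mu> a)
  then show ?case
    by (simp add: update_eq_add_single distrib_right eval_unit_add eval_unit_single_mult)
qed simp

lemma eval_unit_var: "eval_unit c (var l) = (if l = c then 1 else 0)"
  by (simp add: var_def eval_unit_single)

lemma not_dvd_if_eval_unit:
  assumes "eval_unit c g \<noteq> 0" "eval_unit c p = 0"
  shows "\<not> p dvd g"
  using assms by (auto simp: eval_unit_mult)

definition var_sum :: "nat \<Rightarrow> nat \<Rightarrow> mpoly" where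
  "var_sum s t = (\<Sum>l\<in>{s..<t}. var l)"

lemma eval_unit_var_sum: "eval_unit c (var_sum s t) = (if c \<in> {s..<t} then 1 else 0)"
  by (simp add: var_sum_def eval_unit_sum eval_unit_var)

lemma var_sum_nonzero: "s < t \<Longrightarrow> var_sum s t \<noteq> 0"
  using eval_unit_var_sum[of s s t] by auto

lemma var_sum_split: "s \<le> r \<Longrightarrow> r \<le> t \<Longrightarrow> var_sum s t = var_sum s r + var_sum r t"
  unfolding var_sum_def by (simp add: sum.atLeastLessThan_concat)

lemma var_sum_self [simp]: "var_sum s s = 0"
  by (simp add: var_sum_def)

definition inv_prefix_prod :: "nat \<Rightarrow> nat \<Rightarrow> mpoly fract" where
  "inv_prefix_prod s t = (\<Prod>j\<in>{s..<t}. inverse (to_fract (var_sum s (Suc j))))"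

definition inv_suffix_prod :: "nat \<Rightarrow> nat \<Rightarrow> mpoly fract" where
  "inv_suffix_prod s t = (\<Prod>i\<in>{s..<t}. inverse (to_fract (var_sum i t)))"

lemma inv_prefix_prod_self [simp]: "inv_prefix_prod s s = 1"
  by (simp add: inv_prefix_prod_def)

lemma inv_suffix_prod_self [simp]: "inv_suffix_prod s s = 1"
  by (simp add: inv_suffix_prod_def)

lemma var_sum_mult_inv_prefix_prod:
  assumes "s < t"
  shows "to_fract (var_sum s t) * inv_prefix_prod s t = inv_prefix_prod s (t - 1)"
proof -
  obtain t' where t: "t = Suc t'" "s \<le> t'" using assms by (cases t) auto
  show ?thesis
    using var_sum_nonzero[OF assms] t(2) unfolding t inv_prefix_prod_def
    by (simp add: prod.atLeastLessThan_Suc[OF t(2)])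
qed

lemma var_sum_mult_inv_suffix_prod:
  assumes "s < t"
  shows "to_fract (var_sum s t) * inv_suffix_prod s t = inv_suffix_prod (Suc s) t"
  using var_sum_nonzero[OF assms] assms
  by (simp add: inv_suffix_prod_def prod.atLeast_Suc_lessThan)

section \<open>The alternating sums\<close>

definition alt_sum :: "nat \<Rightarrow> nat \<Rightarrow> nat \<Rightarrow> mpoly fract" where
  "alt_sum u s t = (\<Sum>p\<in>{s..u}. (-1) ^ p * inv_suffix_prod s p * inv_prefix_prod p t)"

lemma alt_sum_rec:
  assumes "s \<le> u" "u < t"
  shows "to_fract (var_sum s t) * alt_sum u s t = alt_sum u (Suc s) t + alt_sum u s (t - 1)"
proof -
  have "to_fract (var_sum s t) * alt_sum u s t =
          (\<Sum>p\<in>{s..u}. (-1) ^ p * (to_fract (var_sum s p) * inv_suffix_prod s p) * inv_prefix_prod p t)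
        + (\<Sum>p\<in>{s..u}. (-1) ^ p * inv_suffix_prod s p * (to_fract (var_sum p t) * inv_prefix_prod p t))"
    unfolding alt_sum_def sum_distrib_left sum.distrib[symmetric]
    by (rule sum.cong) (use assms in \<open>auto simp: var_sum_split[of s _ t] algebra_simps\<close>)
  also have "(\<Sum>p\<in>{s..u}. (-1) ^ p * (to_fract (var_sum s p) * inv_suffix_prod s p) * inv_prefix_prod p t)
      = alt_sum u (Suc s) t"
    using assms unfolding alt_sum_def
    by (simp add: sum.atLeast_Suc_atMost var_sum_mult_inv_suffix_prod)
  also have "(\<Sum>p\<in>{s..u}. (-1) ^ p * inv_suffix_prod s p * (to_fract (var_sum p t) * inv_prefix_prod p t))
      = alt_sum u s (t - 1)"
    unfolding alt_sum_def by (rule sum.cong) (use assms in \<open>auto simp: var_sum_mult_inv_prefix_prod\<close>)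
  finally show ?thesis .
qed

lemma alt_sum_Suc_upper:
  "s \<le> Suc u \<Longrightarrow> alt_sum (Suc u) s t =
     alt_sum u s t + (-1) ^ Suc u * inv_suffix_prod s (Suc u) * inv_prefix_prod (Suc u) t"
  by (simp add: alt_sum_def)

lemma alt_sum_diag_rec:
  assumes "s < t"
  shows "to_fract (var_sum s t) * alt_sum t s t = alt_sum t (Suc s) t + alt_sum (t - 1) s (t - 1)"
proof -
  obtain u where t: "t = Suc u" "s \<le> u" using assms by (cases t) auto
  let ?v = "to_fract (var_sum s t)"
  have "?v * alt_sum t s t = ?v * alt_sum u s t + (-1) ^ t * (?v * inv_suffix_prod s t)"
    using t by (simp add: alt_sum_Suc_upper algebra_simps)
  also have "\<dots> = alt_sum u (Suc s) t + (-1) ^ t * inv_suffix_prod (Suc s) t + alt_sum u s u"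
    using alt_sum_rec[of s u t] var_sum_mult_inv_suffix_prod[OF assms] t by simp
  also have "\<dots> = alt_sum t (Suc s) t + alt_sum (t - 1) s (t - 1)"
    using t by (simp add: alt_sum_Suc_upper)
  finally show ?thesis .
qed

lemma alt_sum_diag_eq_0: "s < t \<Longrightarrow> alt_sum t s t = 0"
proof (induction "t - s" arbitrary: s t rule: less_induct)
  case less
  have "alt_sum t (Suc s) t + alt_sum (t - 1) s (t - 1) = 0"
  proof (cases "t = Suc s")
    case True
    then show ?thesis by (simp add: alt_sum_def)
  next
    case False
    with less show ?thesis by simp
  qed
  with alt_sum_diag_rec[OF less.prems] var_sum_nonzero[OF less.prems] show ?case by simp
qed

section \<open>Recursion on the length of \<open>\<epsilon>\<close>\<close>

lemma Mpoly_eq_var_sum: "Mpoly eps j = var_sum (Lidx eps j) (Suc j)"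
  by (simp add: Mpoly_def var_sum_def atLeastLessThanSuc_atLeastAtMost)

lemma Fract_one_Mpoly: "Fract 1 (Mpoly eps j) = inverse (to_fract (var_sum (Lidx eps j) (Suc j)))"
  by (simp add: Mpoly_eq_var_sum to_fract_def)

lemma delta_snoc_False: "delta (eps @ [False]) = delta eps"
  by (rule ext) (auto simp: delta_def nth_append)

lemma delta_snoc_True: "delta (eps @ [True]) i \<longleftrightarrow> delta eps i \<or> i = length eps + 2"
  by (auto simp: delta_def nth_append)

lemma delta_le_length: "delta eps i \<Longrightarrow> i \<le> length eps + 1"
  by (auto simp: delta_def)

lemma Lidx_snoc_True_below: "j < length eps + 2 \<Longrightarrow> Lidx (eps @ [True]) j = Lidx eps j"
  unfolding Lidx_def by (rule arg_cong[where f = Max]) (auto simp: delta_snoc_True)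

lemma Lidx_snoc_True_above: "length eps + 2 \<le> j \<Longrightarrow> Lidx (eps @ [True]) j = length eps + 2"
  unfolding Lidx_def by (rule Max_eqI) (auto simp: delta_snoc_True dest: delta_le_length)

lemma Lidx_Nil: "1 \<le> j \<Longrightarrow> Lidx [] j = 1"
  unfolding Lidx_def by (rule Max_eqI) (auto simp: delta_def)

lemma Pfrac_Nil: "Pfrac m [] = inv_prefix_prod 1 (Suc m)"
  unfolding Pfrac_def inv_prefix_prod_def Fract_one_Mpoly
  by (simp add: Lidx_Nil atLeastLessThanSuc_atLeastAtMost)

lemma Pfrac_snoc_False: "Pfrac m (eps @ [False]) = Pfrac (Suc m) eps"
  by (simp add: Pfrac_def Mpoly_def Lidx_def delta_snoc_False)

lemma Pfrac_snoc_True: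
  "Pfrac m (eps @ [True]) = Pfrac 1 eps * inv_prefix_prod (length eps + 2) (length eps + m + 2)"
proof -
  let ?n = "length eps + 1"
  let ?f = "\<lambda>j. Fract 1 (Mpoly (eps @ [True]) j)"
  have "Pfrac m (eps @ [True]) = prod ?f {1..?n} * prod ?f {?n + 1..?n + m}"
    unfolding Pfrac_def using prod.ub_add_nat[of 1 ?n ?f m] by simp
  also have "prod ?f {1..?n} = Pfrac 1 eps"
    unfolding Pfrac_def Fract_one_Mpoly by (intro prod.cong) (auto simp: Lidx_snoc_True_below)
  also have "prod ?f {?n + 1..?n + m} = inv_prefix_prod (length eps + 2) (length eps + m + 2)"
    unfolding inv_prefix_prod_def Fract_one_Mpoly
    by (intro prod.cong) (auto simp: Lidx_snoc_True_above)
  finally show ?thesis .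
qed

lemma lists_length_Suc_snoc:
  "{eps :: bool list. length eps = Suc k} =
     (\<lambda>eps. eps @ [False]) ` {eps. length eps = k} \<union> (\<lambda>eps. eps @ [True]) ` {eps. length eps = k}"
proof (intro set_eqI iffI)
  fix xs :: "bool list"
  assume "xs \<in> {eps. length eps = Suc k}"
  then obtain ys y where "xs = ys @ [y]" "length ys = k"
    by (auto simp: length_Suc_conv_rev)
  then show "xs \<in> (\<lambda>eps. eps @ [False]) ` {eps. length eps = k} \<union> (\<lambda>eps. eps @ [True]) ` {eps. length eps = k}"
    by (cases y) auto
qed auto

lemma Qfrac_Suc:
  "Qfrac (Suc k) m = Qfrac k (Suc m) - Qfrac k 1 * inv_prefix_prod (k + 2) (k + m + 2)"
proof -
  let ?L = "{eps :: bool list. length eps = k}"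
  let ?g = "\<lambda>eps. (-1) ^ count_list eps True * Pfrac m eps"
  have fin: "finite ?L"
    using finite_lists_length_eq[of "UNIV :: bool set" k] by simp
  have "Qfrac (Suc k) m = sum ?g ((\<lambda>eps. eps @ [False]) ` ?L) + sum ?g ((\<lambda>eps. eps @ [True]) ` ?L)"
    unfolding Qfrac_def lists_length_Suc_snoc by (rule sum.union_disjoint) (use fin in auto)
  also have "sum ?g ((\<lambda>eps. eps @ [False]) ` ?L) = Qfrac k (Suc m)"
    unfolding Qfrac_def by (simp add: sum.reindex inj_on_def Pfrac_snoc_False)
  also have "sum ?g ((\<lambda>eps. eps @ [True]) ` ?L) =
      (\<Sum>eps\<in>?L. - ((-1) ^ count_list eps True * Pfrac 1 eps * inv_prefix_prod (k + 2) (k + m + 2)))"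
    by (simp add: sum.reindex inj_on_def Pfrac_snoc_True mult.assoc)
  also have "\<dots> = - (Qfrac k 1 * inv_prefix_prod (k + 2) (k + m + 2))"
    unfolding Qfrac_def by (simp add: sum_distrib_right sum_negf)
  finally show ?thesis by simp
qed

lemma Qfrac_eq_alt_sum: "Qfrac k m = - alt_sum (Suc k) 1 (k + m + 1)"
proof (induction k arbitrary: m)
  case 0
  then show ?case by (simp add: Qfrac_def Pfrac_Nil alt_sum_def)
next
  case (Suc k)
  have "alt_sum (Suc k) 1 (k + 2) = - ((-1) ^ (k + 2) * inv_suffix_prod 1 (k + 2))"
    using alt_sum_diag_eq_0[of 1 "k + 2"] alt_sum_Suc_upper[of 1 "Suc k" "k + 2"]
    by (simp add: eq_neg_iff_add_eq_0)
  then show ?case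
    using Suc.IH[of 1] Suc.IH[of "Suc m"] alt_sum_Suc_upper[of 1 "Suc k" "k + m + 2"]
    by (simp add: Qfrac_Suc algebra_simps)
qed

section \<open>Rational functions regular at a unit vector\<close>

definition regular_at :: "nat \<Rightarrow> mpoly fract \<Rightarrow> bool" where
  "regular_at c u \<longleftrightarrow> (\<exists>f g. eval_unit c g \<noteq> 0 \<and> u = Fract f g)"

lemma regular_at_to_fract: "regular_at c (to_fract p)"
  unfolding regular_at_def to_fract_def by (intro exI[of _ p] exI[of _ 1]) (simp add: eval_unit_def)

lemma regular_at_zero: "regular_at c 0"
  using regular_at_to_fract[of c 0] by simp

lemma regular_at_one: "regular_at c 1"
  using regular_at_to_fract[of c 1] by simp

lemma regular_at_add:
  assumes "regular_at c u" "regular_at c v"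
  shows "regular_at c (u + v)"
proof -
  obtain f g f' g' where "eval_unit c g \<noteq> 0" "u = Fract f g" "eval_unit c g' \<noteq> 0" "v = Fract f' g'"
    using assms unfolding regular_at_def by blast
  moreover from this have "g \<noteq> 0" "g' \<noteq> 0" by auto
  ultimately have "eval_unit c (g * g') \<noteq> 0" "u + v = Fract (f * g' + f' * g) (g * g')"
    by (simp_all add: eval_unit_mult)
  then show ?thesis unfolding regular_at_def by blast
qed

lemma regular_at_mult:
  assumes "regular_at c u" "regular_at c v"
  shows "regular_at c (u * v)"
proof -
  obtain f g f' g' where "eval_unit c g \<noteq> 0" "u = Fract f g" "eval_unit c g' \<noteq> 0" "v = Fract f' g'"
    using assms unfolding regular_at_def by blast
  then have "eval_unit c (g * g') \<noteq> 0" "u * v = Fract (f * f') (g * g')"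
    by (simp_all add: eval_unit_mult)
  then show ?thesis unfolding regular_at_def by blast
qed

lemma regular_at_uminus: "regular_at c u \<Longrightarrow> regular_at c (- u)"
  unfolding regular_at_def by force

lemma regular_at_power: "regular_at c u \<Longrightarrow> regular_at c (u ^ n)"
  by (induction n) (auto intro: regular_at_mult regular_at_one)

lemma regular_at_inverse_var_sum: "s \<le> c \<Longrightarrow> c < t \<Longrightarrow> regular_at c (inverse (to_fract (var_sum s t)))"
  unfolding regular_at_def to_fract_def
  by (intro exI[of _ 1] exI[of _ "var_sum s t"]) (simp add: eval_unit_var_sum)

lemma regular_at_alt_sum_base: "s \<le> Suc u \<Longrightarrow> regular_at u (alt_sum u s u)"
proof -
  assume "s \<le> Suc u"
  then consider "s < u" | "s = u" | "s = Suc u" by linarith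
  then show ?thesis
  proof cases
    case 1
    then show ?thesis using alt_sum_diag_eq_0 regular_at_zero by simp
  next
    case 2
    then show ?thesis
      by (simp add: alt_sum_def regular_at_power regular_at_uminus regular_at_one)
  next
    case 3
    then show ?thesis by (simp add: alt_sum_def regular_at_zero)
  qed
qed

lemma regular_at_alt_sum:
  assumes "u \<le> t"
  shows "s \<le> Suc u \<Longrightarrow> regular_at u (alt_sum u s t)"
  using assms
proof (induction t arbitrary: s rule: dec_induct)
  case base
  then show ?case by (rule regular_at_alt_sum_base)
next
  case (step t)
  note regular_at_t = step.IH
  from \<open>s \<le> Suc u\<close> show ?case
  proof (induction s rule: inc_induct)
    case base
    then show ?case by (simp add: alt_sum_def regular_at_zero)
  next
    case (step s)
    have "alt_sum u s (Suc t) =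
            inverse (to_fract (var_sum s (Suc t))) * (alt_sum u (Suc s) (Suc t) + alt_sum u s t)"
      using alt_sum_rec[of s u "Suc t"] var_sum_nonzero[of s "Suc t"] \<open>s < Suc u\<close> \<open>u \<le> t\<close>
      by (simp add: field_simps)
    then show ?case
      using step.IH regular_at_t[of s] \<open>u \<le> t\<close> \<open>s < Suc u\<close>
      by (auto intro!: regular_at_mult regular_at_add regular_at_inverse_var_sum)
  qed
qed

theorem mainTheorem8:
  fixes k m :: nat
  assumes "m \<ge> 1"
  shows "\<exists>f g :: mpoly. g \<noteq> 0 \<and> Qfrac k m = Fract f g \<and>
           (\<forall>eps'. length eps' = k \<longrightarrow> (\<forall>t\<in>{1..k}. \<not> Mpoly eps' t dvd g))"
proof -
  have "regular_at (Suc k) (Qfrac k m)"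
    unfolding Qfrac_eq_alt_sum by (intro regular_at_uminus regular_at_alt_sum) simp_all
  then obtain f g where g: "eval_unit (Suc k) g \<noteq> 0" and "Qfrac k m = Fract f g"
    unfolding regular_at_def by blast
  moreover have "\<not> Mpoly eps' t dvd g" if "t \<le> k" for eps' t
    using that by (intro not_dvd_if_eval_unit[OF g]) (simp add: Mpoly_eq_var_sum eval_unit_var_sum)
  ultimately show ?thesis
    using g by (intro exI[of _ f] exI[of _ g]) auto
qed

end
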